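(* Let $\mathbf{X}\subseteq\mathbb{R}_+^n$ be an interval and let $\mathrm{IC}(\mathbf{a}_0,\dots,\mathbf{a}_{n-1})$ be an interval circulant matrix containing $\hat A$. Then $\mathrm{IC}(\mathbf{a}_0,\dots,\mathbf{a}_{n-1})$ is possibly $\mathbf{X}$-robust, i.e. there exists $A\in\mathrm{IC}(\mathbf{a}_0,\dots,\mathbf{a}_{n-1})$ with $x\in\mathrm{Attr}(A)$ for all $x\in\mathbf{X}$, if and only if $x^{(i)}\in\mathrm{Attr}(\hat A)$ for all $i\in\{1,\dots,n\}$.
   Context: Max algebra on $\mathbb{R}_+$: $\oplus=\max$, ordinary product, $A^t$ max-algebraic power; $\lambda(A)$ greatest max-algebraic eigenvalue (maximum cycle geometric mean); $\mathrm{Attr}(A)=\{x\in\mathbb{R}_+^n: A^{t+1}\otimes x=\lambda(A)A^t\otimes x\text{ for some } t\ge0\}$. An interval $\mathbf{X}=\prod_i\mathbf{X}_i$ has each $\mathbf{X}_i\subseteq\mathbb{R}_+$ nonempty of one of the forms $[\underline{x}_i,\overline{x}_i]$, $(\underline{x}_i,\overline{x}_i)$, $(\underline{x}_i,\overline{x}_i]$, $[\underline{x}_i,\overline{x}_i)$; $x^{(k)}=(\underline{x}_1,\dots,\underline{x}_{k-1},\overline{x}_k,\underline{x}_{k+1},\dots,\underline{x}_n)$. $\mathrm{Circ}(a_0,\dots,a_{n-1})$ has entries $A_{i,j}=a_t$, $t\equiv j-i\pmod n$, $t\in\{0,..,n-1\}$; the interval circulant matrix $\mathrm{IC}(\mathbf{a}_0,\dots,\mathbf{a}_{n-1})$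 is the set of all $\mathrm{Circ}(a_0,\dots,a_{n-1})$ with $a_t\in\mathbf{a}_t$, each $\mathbf{a}_t\subseteq\mathbb{R}_+$ a nonempty interval of one of the four forms with endpoints $\underline a_t\le\overline a_t$. $\underline a=\max_k\underline a_k$, $\hat A=\mathrm{Circ}(\hat a_0,\dots,\hat a_{n-1})$ with $\hat a_i=\min\{\underline a,\overline a_i\}$. *)

theory Defs
  imports Complex_Main
begin

text \<open>Square matrices of size n are functions
  nat \<Rightarrow> nat \<Rightarrow> real, vectors are functions nat \<Rightarrow> real; only indices below n
  matter. Indices are 0-based (paper: 1..n).\<close>

definition mx_mult :: "nat \<Rightarrow> (nat \<Rightarrow> nat \<Rightarrow> real) \<Rightarrow> (nat \<Rightarrow> nat \<Rightarrow> real) \<Rightarrow> (nat \<Rightarrow> nat \<Rightarrow> real)" where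
  "mx_mult n A B = (\<lambda>i j. Max ((\<lambda>k. A i k * B k j) ` {0..<n}))"

definition mx_id :: "nat \<Rightarrow> nat \<Rightarrow> real" where
  "mx_id = (\<lambda>i j. if i = j then 1 else 0)"

fun mx_pow :: "nat \<Rightarrow> (nat \<Rightarrow> nat \<Rightarrow> real) \<Rightarrow> nat \<Rightarrow> (nat \<Rightarrow> nat \<Rightarrow> real)" where
  "mx_pow n A 0 = mx_id"
| "mx_pow n A (Suc t) = mx_mult n A (mx_pow n A t)"

definition mx_vec :: "nat \<Rightarrow> (nat \<Rightarrow> nat \<Rightarrow> real) \<Rightarrow> (nat \<Rightarrow> real) \<Rightarrow> (nat \<Rightarrow> real)" where
  "mx_vec n A x = (\<lambda>i. Max ((\<lambda>k. A i k * x k) ` {0..<n}))"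

text \<open>Greatest max-algebraic eigenvalue = maximum cycle geometric mean
  (over all closed walks of length k, 1 \<le> k \<le> n).\<close>
definition mx_lambda :: "nat \<Rightarrow> (nat \<Rightarrow> nat \<Rightarrow> real) \<Rightarrow> real" where
  "mx_lambda n A = Max {root k (\<Prod>j<k. A (c j) (c (Suc j mod k))) | k c.
      1 \<le> k \<and> k \<le> n \<and> (\<forall>j<k. c j < n)}"

definition nonneg_vec :: "nat \<Rightarrow> (nat \<Rightarrow> real) set" where
  "nonneg_vec n = {x. \<forall>i<n. 0 \<le> x i}"

definition Attr :: "nat \<Rightarrow> (nat \<Rightarrow> nat \<Rightarrow> real) \<Rightarrow> (nat \<Rightarrow> real) set" where
  "Attr n A = {x. x \<in> nonneg_vec n \<and> (\<exists>t::nat. \<forall>i<n.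
      mx_vec n (mx_pow n A (Suc t)) x i = mx_lambda n A * mx_vec n (mx_pow n A t) x i)}"

definition ivl :: "real \<Rightarrow> real \<Rightarrow> bool \<Rightarrow> bool \<Rightarrow> real set" where
  "ivl lo hi cl cr = {x. (if cl then lo \<le> x else lo < x) \<and> (if cr then x \<le> hi else x < hi)}"

definition ivl_ok :: "real \<Rightarrow> real \<Rightarrow> bool \<Rightarrow> bool \<Rightarrow> bool" where
  "ivl_ok lo hi cl cr \<longleftrightarrow> 0 \<le> lo \<and> lo \<le> hi \<and> ivl lo hi cl cr \<noteq> {}"

definition box :: "nat \<Rightarrow> (nat \<Rightarrow> real) \<Rightarrow> (nat \<Rightarrow> real) \<Rightarrow> (nat \<Rightarrow> bool) \<Rightarrow> (nat \<Rightarrow> bool) \<Rightarrow> (nat \<Rightarrow> real) set" where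
  "box n lo hi cl cr = {x. \<forall>i<n. x i \<in> ivl (lo i) (hi i) (cl i) (cr i)}"

text \<open>x^(k): upper endpoint in coordinate k, lower endpoints elsewhere.\<close>
definition xk :: "(nat \<Rightarrow> real) \<Rightarrow> (nat \<Rightarrow> real) \<Rightarrow> nat \<Rightarrow> (nat \<Rightarrow> real)" where
  "xk lo hi k = (\<lambda>i. if i = k then hi i else lo i)"

definition circ :: "nat \<Rightarrow> (nat \<Rightarrow> real) \<Rightarrow> (nat \<Rightarrow> nat \<Rightarrow> real)" where
  "circ n a = (\<lambda>i j. a ((j + n - i) mod n))"

definition IC :: "nat \<Rightarrow> (nat \<Rightarrow> real) \<Rightarrow> (nat \<Rightarrow> real) \<Rightarrow> (nat \<Rightarrow> bool) \<Rightarrow> (nat \<Rightarrow> bool) \<Rightarrow> (nat \<Rightarrow> nat \<Rightarrow> real) set" where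
  "IC n alo ahi acl acr = {circ n a | a. \<forall>t<n. a t \<in> ivl (alo t) (ahi t) (acl t) (acr t)}"

definition hatA :: "nat \<Rightarrow> (nat \<Rightarrow> real) \<Rightarrow> (nat \<Rightarrow> real) \<Rightarrow> (nat \<Rightarrow> nat \<Rightarrow> real)" where
  "hatA n alo ahi = circ n (\<lambda>i. min (Max (alo ` {0..<n})) (ahi i))"

end

theory Submission
  imports Defs
begin

(*
  For a circulant A = Circ a whose largest entry is a_k, a heaviest walk of length m + 1 >= n
  contains, by pigeonhole on its partial sums, a segment of offsets summing to (its length) * k
  modulo n; trading it for k-steps shows A^(m+1) x = a_k * (A^m x rotated by k). Hence x lies in
  Attr(A) iff A^(n-1) x is invariant under rotation by k.

  For A = Circ a in the interval matrix, hat a is maximal at the same position k and satisfies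
  hat a_k * a <= a_k * hat a. Therefore a_k * hatA^(N+1) = hat a_k * hatA^N A for N >= n - 1,
  which transfers rotation invariance from A to hatA, so Attr(A) is contained in Attr(hatA).
  Being attracted at the fixed time n - 1 is a closed condition and the corners x^(i) are limits
  of points of X; so if X lies in Attr(A), the corners lie in Attr(hatA). Conversely Attr(hatA)
  is closed under max-combinations (all members are attracted at a common time), and each x in X
  is the max-combination of the corners with coefficients x_i / xhi_i.
*)

lemma Max_mult_commute:
  fixes f :: "'a \<Rightarrow> real"
  assumes "finite S" "S \<noteq> {}" "0 \<le> c"
  shows "Max ((\<lambda>x. c * f x) ` S) = c * Max (f ` S)"
proof -
  have "(\<lambda>x. c * f x) ` S = (*) c ` f ` S" by auto
  also have "Max \<dots> = c * Max (f ` S)"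
    using assms by (intro hom_Max_commute[symmetric]) (auto simp: max_def mult_left_mono)
  finally show ?thesis .
qed

lemma Max_Max_le_swap:
  fixes f :: "'a \<Rightarrow> 'b \<Rightarrow> 'c::linorder"
  assumes "finite I" "I \<noteq> {}" "finite J" "J \<noteq> {}"
  shows "Max ((\<lambda>i. Max (f i ` J)) ` I) \<le> Max ((\<lambda>j. Max ((\<lambda>i. f i j) ` I)) ` J)"
proof -
  have "f i j \<le> Max ((\<lambda>j. Max ((\<lambda>i. f i j) ` I)) ` J)" if "i \<in> I" "j \<in> J" for i j
    using assms that by (meson Max_ge finite_imageI imageI order_trans)
  then show ?thesis
    using assms by simp
qed

lemma Max_Max_swap:
  fixes f :: "'a \<Rightarrow> 'b \<Rightarrow> 'c::linorder"
  assumes "finite I" "I \<noteq> {}" "finite J" "J \<noteq> {}"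
  shows "Max ((\<lambda>i. Max (f i ` J)) ` I) = Max ((\<lambda>j. Max ((\<lambda>i. f i j) ` I)) ` J)"
  using Max_Max_le_swap[OF assms] Max_Max_le_swap[OF assms(3,4,1,2), of "\<lambda>j i. f i j"]
  by (rule antisym)

section \<open>Max-algebraic matrix-vector products\<close>

definition nonneg_mat :: "nat \<Rightarrow> (nat \<Rightarrow> nat \<Rightarrow> real) \<Rightarrow> bool" where
  "nonneg_mat n M \<longleftrightarrow> (\<forall>i<n. \<forall>k<n. 0 \<le> M i k)"

abbreviation mx_iter :: "nat \<Rightarrow> (nat \<Rightarrow> nat \<Rightarrow> real) \<Rightarrow> nat \<Rightarrow> (nat \<Rightarrow> real) \<Rightarrow> nat \<Rightarrow> real" where
  "mx_iter n M t x \<equiv> mx_vec n (mx_pow n M t) x"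

lemma mx_vec_cong: "(\<And>k. k < n \<Longrightarrow> y k = y' k) \<Longrightarrow> mx_vec n M y = mx_vec n M y'"
  unfolding mx_vec_def by (intro ext arg_cong[where f = Max] image_cong) auto

lemma mx_vec_ge: "k < n \<Longrightarrow> M i k * y k \<le> mx_vec n M y i"
  unfolding mx_vec_def by (intro Max_ge) auto

lemma mx_vec_nonneg:
  assumes "1 \<le> n" "nonneg_mat n M" "y \<in> nonneg_vec n"
  shows "mx_vec n M y \<in> nonneg_vec n"
  unfolding nonneg_vec_def mem_Collect_eq
proof (intro allI impI)
  fix i assume "i < n"
  then have "0 \<le> M i 0 * y 0"
    using assms by (simp add: nonneg_mat_def nonneg_vec_def)
  also have "\<dots> \<le> mx_vec n M y i"
    using assms by (intro mx_vec_ge) auto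
  finally show "0 \<le> mx_vec n M y i" .
qed

lemma mx_vec_scale:
  assumes "1 \<le> n" "0 \<le> c"
  shows "mx_vec n M (\<lambda>k. c * y k) i = c * mx_vec n M y i"
  unfolding mx_vec_def using assms
  by (subst Max_mult_commute[symmetric]) (auto simp: mult.left_commute)

lemma mx_vec_mono:
  assumes "1 \<le> n" "nonneg_mat n M" "i < n" "\<And>k. k < n \<Longrightarrow> y k \<le> y' k"
  shows "mx_vec n M y i \<le> mx_vec n M y' i"
proof -
  have "M i k * y k \<le> mx_vec n M y' i" if "k < n" for k
    using assms that by (intro order_trans[OF mult_left_mono mx_vec_ge]) (auto simp: nonneg_mat_def)
  then show ?thesis
    using assms(1) by (simp add: mx_vec_def[of n M y])
qed

lemma mx_vec_Max_comb:
  assumes "1 \<le> n" "nonneg_mat n M" "i < n" "finite J" "J \<noteq> {}" "\<And>j. j \<in> J \<Longrightarrow> 0 \<le> c j"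
  shows "mx_vec n M (\<lambda>k. Max ((\<lambda>j. c j * v j k) ` J)) i = Max ((\<lambda>j. c j * mx_vec n M (v j) i) ` J)"
proof -
  have "mx_vec n M (\<lambda>k. Max ((\<lambda>j. c j * v j k) ` J)) i
      = Max ((\<lambda>k. Max ((\<lambda>j. M i k * (c j * v j k)) ` J)) ` {0..<n})"
    unfolding mx_vec_def using assms
    by (intro arg_cong[where f = Max] image_cong refl, subst Max_mult_commute)
       (auto simp: nonneg_mat_def)
  also have "\<dots> = Max ((\<lambda>j. Max ((\<lambda>k. M i k * (c j * v j k)) ` {0..<n})) ` J)"
    using assms by (intro Max_Max_swap) auto
  also have "\<dots> = Max ((\<lambda>j. c j * mx_vec n M (v j) i) ` J)"
    unfolding mx_vec_def using assms
    by (intro arg_cong[where f = Max] image_cong refl, subst Max_mult_commute[symmetric])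
       (auto simp: mult.left_commute)
  finally show ?thesis .
qed

lemma mx_vec_mx_mult:
  assumes "1 \<le> n" "nonneg_mat n A" "nonneg_mat n B" "y \<in> nonneg_vec n" "i < n"
  shows "mx_vec n (mx_mult n A B) y i = mx_vec n A (mx_vec n B y) i"
proof -
  have "Max ((\<lambda>l. A i l * B l k) ` {0..<n}) * y k = Max ((\<lambda>l. A i l * B l k * y k) ` {0..<n})"
    if "k < n" for k
    using Max_mult_commute[of "{0..<n}" "y k" "\<lambda>l. A i l * B l k"] assms that
    by (simp add: nonneg_vec_def mult.commute)
  then have "mx_vec n (mx_mult n A B) y i = Max ((\<lambda>k. Max ((\<lambda>l. A i l * B l k * y k) ` {0..<n})) ` {0..<n})"
    unfolding mx_vec_def mx_mult_def by (intro arg_cong[where f = Max] image_cong) auto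
  also have "\<dots> = Max ((\<lambda>l. Max ((\<lambda>k. A i l * B l k * y k) ` {0..<n})) ` {0..<n})"
    using assms by (intro Max_Max_swap) auto
  also have "\<dots> = mx_vec n A (mx_vec n B y) i"
    unfolding mx_vec_def using assms
    by (intro arg_cong[where f = Max] image_cong refl, subst Max_mult_commute[symmetric])
       (auto simp: nonneg_mat_def mult.assoc)
  finally show ?thesis .
qed

lemma nonneg_mat_mx_pow:
  assumes "nonneg_mat n M"
  shows "nonneg_mat n (mx_pow n M t)"
proof (induction t)
  case 0
  show ?case by (simp add: nonneg_mat_def mx_id_def)
next
  case (Suc t)
  show ?case unfolding nonneg_mat_def
  proof (intro allI impI)
    fix i k assume "i < n" "k < n"
    then have "0 \<le> M i 0 * mx_pow n M t 0 k"
      using assms Suc by (simp add: nonneg_mat_def)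
    also have "\<dots> \<le> mx_pow n M (Suc t) i k"
      using \<open>i < n\<close> by (auto simp: mx_mult_def intro: Max_ge)
    finally show "0 \<le> mx_pow n M (Suc t) i k" .
  qed
qed

lemma mx_iter_0: "y \<in> nonneg_vec n \<Longrightarrow> i < n \<Longrightarrow> mx_iter n M 0 y i = y i"
  unfolding mx_vec_def nonneg_vec_def by (intro Max_eqI) (force simp: mx_id_def)+

lemma mx_iter_Suc:
  assumes "1 \<le> n" "nonneg_mat n M" "y \<in> nonneg_vec n" "i < n"
  shows "mx_iter n M (Suc t) y i = mx_vec n M (mx_iter n M t y) i"
  using mx_vec_mx_mult[OF assms(1,2) nonneg_mat_mx_pow[OF assms(2)] assms(3,4)] by simp

lemma mx_iter_nonneg:
  "1 \<le> n \<Longrightarrow> nonneg_mat n M \<Longrightarrow> y \<in> nonneg_vec n \<Longrightarrow> mx_iter n M t y \<in> nonneg_vec n"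
  by (intro mx_vec_nonneg nonneg_mat_mx_pow)

lemma mx_iter_Suc':
  assumes "1 \<le> n" "nonneg_mat n M" "y \<in> nonneg_vec n" "i < n"
  shows "mx_iter n M (Suc t) y i = mx_iter n M t (mx_vec n M y) i"
  using assms(4)
proof (induction t arbitrary: i)
  case 0
  have "mx_vec n M (mx_iter n M 0 y) = mx_vec n M y"
    using mx_iter_0[OF assms(3)] by (intro mx_vec_cong) auto
  then show ?case
    using mx_iter_Suc[OF assms(1-3) 0, of 0] mx_iter_0[OF mx_vec_nonneg[OF assms(1-3)] 0] by simp
next
  case (Suc t)
  have "mx_iter n M (Suc (Suc t)) y i = mx_vec n M (mx_iter n M (Suc t) y) i"
    using mx_iter_Suc[OF assms(1-3) Suc.prems] .
  also have "\<dots> = mx_vec n M (mx_iter n M t (mx_vec n M y)) i"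
    by (simp only: mx_vec_cong[OF Suc.IH])
  also have "\<dots> = mx_iter n M (Suc t) (mx_vec n M y) i"
    using mx_iter_Suc[OF assms(1,2) mx_vec_nonneg[OF assms(1-3)] Suc.prems] by simp
  finally show ?case .
qed

section \<open>Eigenspaces and attraction\<close>

definition in_eigenspace :: "nat \<Rightarrow> (nat \<Rightarrow> nat \<Rightarrow> real) \<Rightarrow> real \<Rightarrow> (nat \<Rightarrow> real) \<Rightarrow> bool" where
  "in_eigenspace n M L v \<longleftrightarrow> (\<forall>i<n. mx_vec n M v i = L * v i)"

lemma in_eigenspace_cong:
  "(\<And>k. k < n \<Longrightarrow> v k = v' k) \<Longrightarrow> in_eigenspace n M L v \<longleftrightarrow> in_eigenspace n M L v'"
  unfolding in_eigenspace_def by (simp add: mx_vec_cong[of n v v'])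

lemma Attr_iff_eigenspace:
  assumes "1 \<le> n" "nonneg_mat n M"
  shows "x \<in> Attr n M \<longleftrightarrow>
    x \<in> nonneg_vec n \<and> (\<exists>t. in_eigenspace n M (mx_lambda n M) (mx_iter n M t x))"
proof -
  have "in_eigenspace n M L (mx_iter n M t x) \<longleftrightarrow>
      (\<forall>i<n. mx_iter n M (Suc t) x i = L * mx_iter n M t x i)" if "x \<in> nonneg_vec n" for t L
    using mx_iter_Suc[OF assms that] by (auto simp: in_eigenspace_def simp del: mx_pow.simps)
  then show ?thesis
    unfolding Attr_def by auto
qed

lemma in_eigenspace_mx_vec:
  assumes "1 \<le> n" "0 \<le> L" "in_eigenspace n M L v"
  shows "in_eigenspace n M L (mx_vec n M v)"
  unfolding in_eigenspace_def
proof (intro allI impI)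
  fix i assume "i < n"
  have "mx_vec n M (mx_vec n M v) i = mx_vec n M (\<lambda>k. L * v k) i"
    using assms(3) by (simp only: in_eigenspace_def mx_vec_cong[of n "mx_vec n M v"])
  also have "\<dots> = L * mx_vec n M v i"
    using assms(1,2) by (rule mx_vec_scale)
  finally show "mx_vec n M (mx_vec n M v) i = L * mx_vec n M v i" .
qed

lemma in_eigenspace_mx_iter_mono:
  assumes "1 \<le> n" "nonneg_mat n M" "0 \<le> L" "x \<in> nonneg_vec n" "t \<le> t'"
    and "in_eigenspace n M L (mx_iter n M t x)"
  shows "in_eigenspace n M L (mx_iter n M t' x)"
  using assms(5)
proof (induction t' rule: dec_induct)
  case base
  show ?case using assms(6) .
next
  case (step s)
  then show ?case
    using in_eigenspace_mx_vec[OF assms(1,3) step.IH] mx_iter_Suc[OF assms(1,2,4)]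
      in_eigenspace_cong[of n "mx_iter n M (Suc s) x" "mx_vec n M (mx_iter n M s x)"]
    by blast
qed

lemma in_eigenspace_Max_comb:
  assumes "1 \<le> n" "nonneg_mat n M" "0 \<le> L" "finite J" "J \<noteq> {}" "\<And>j. j \<in> J \<Longrightarrow> 0 \<le> c j"
    and "\<And>j. j \<in> J \<Longrightarrow> in_eigenspace n M L (v j)"
  shows "in_eigenspace n M L (\<lambda>k. Max ((\<lambda>j. c j * v j k) ` J))"
  unfolding in_eigenspace_def
proof (intro allI impI)
  fix i assume "i < n"
  have "mx_vec n M (\<lambda>k. Max ((\<lambda>j. c j * v j k) ` J)) i = Max ((\<lambda>j. c j * mx_vec n M (v j) i) ` J)"
    using assms \<open>i < n\<close> by (intro mx_vec_Max_comb) auto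
  also have "\<dots> = Max ((\<lambda>j. L * (c j * v j i)) ` J)"
    using assms(7) \<open>i < n\<close> by (intro arg_cong[where f = Max] image_cong) (auto simp: in_eigenspace_def)
  also have "\<dots> = L * Max ((\<lambda>j. c j * v j i) ` J)"
    using assms by (intro Max_mult_commute)
  finally show "mx_vec n M (\<lambda>k. Max ((\<lambda>j. c j * v j k) ` J)) i = L * Max ((\<lambda>j. c j * v j i) ` J)" .
qed

lemma finite_cycle_means:
  "finite {root k (\<Prod>j<k. M (c j) (c (Suc j mod k))) | k c. 1 \<le> k \<and> k \<le> n \<and> (\<forall>j<k. c j < n)}"
  (is "finite {?f k c | k c. ?P k c}")
proof (rule finite_subset)
  let ?L = "{xs. set xs \<subseteq> {0..<n} \<and> length xs = n}"
  show "{?f k c | k c. ?P k c} \<subseteq> (\<lambda>(k, xs). ?f k ((!) xs)) ` ({1..n} \<times> ?L)"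
  proof
    fix z assume "z \<in> {?f k c | k c. ?P k c}"
    then obtain k c where kc: "z = ?f k c" "1 \<le> k" "k \<le> n" "\<forall>j<k. c j < n" by blast
    define xs where "xs = map (\<lambda>j. if j < k then c j else 0) [0..<n]"
    have "Suc j mod k < n" for j
      using kc(2,3) mod_less_divisor[of k "Suc j"] by linarith
    then have "?f k ((!) xs) = z"
      using kc by (auto simp: xs_def intro!: arg_cong[where f = "root k"] prod.cong)
    moreover have "xs \<in> ?L"
      using kc by (auto simp: xs_def)
    ultimately show "z \<in> (\<lambda>(k, xs). ?f k ((!) xs)) ` ({1..n} \<times> ?L)"
      using kc by (intro image_eqI[of _ _ "(k, xs)"]) auto
  qed
  show "finite ((\<lambda>(k, xs). ?f k ((!) xs)) ` ({1..n} \<times> ?L))"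
    using finite_lists_length_eq[of "{0..<n}" n] by simp
qed

lemma mx_lambda_nonneg:
  assumes "1 \<le> n" "nonneg_mat n M"
  shows "0 \<le> mx_lambda n M"
proof -
  have "0 \<le> root 1 (\<Prod>j<1. M ((\<lambda>_. 0) j) ((\<lambda>_. 0) (Suc j mod 1)))"
    using assms by (simp add: nonneg_mat_def)
  also have "\<dots> \<le> mx_lambda n M"
    unfolding mx_lambda_def using assms(1)
    by (intro Max_ge[OF finite_cycle_means] CollectI exI[of _ 1] exI[of _ "\<lambda>_. 0"]) auto
  finally show ?thesis .
qed

lemma Attr_common_time:
  assumes "1 \<le> n" "nonneg_mat n M" "finite J" "\<And>j. j \<in> J \<Longrightarrow> v j \<in> Attr n M"
  obtains T where "\<And>j. j \<in> J \<Longrightarrow> in_eigenspace n M (mx_lambda n M) (mx_iter n M T (v j))"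
proof -
  let ?L = "mx_lambda n M"
  have v: "v j \<in> nonneg_vec n \<and> (\<exists>t. in_eigenspace n M ?L (mx_iter n M t (v j)))" if "j \<in> J" for j
    using assms(4)[OF that] by (simp only: Attr_iff_eigenspace[OF assms(1,2)])
  define t where "t j = (SOME t. in_eigenspace n M ?L (mx_iter n M t (v j)))" for j
  have "in_eigenspace n M ?L (mx_iter n M (t j) (v j))" if "j \<in> J" for j
    unfolding t_def using conjunct2[OF v[OF that]] by (rule someI_ex)
  moreover have "t j \<le> Max (t ` J)" if "j \<in> J" for j
    using assms(3) that by simp
  ultimately have "in_eigenspace n M ?L (mx_iter n M (Max (t ` J)) (v j))" if "j \<in> J" for j
    using that v mx_lambda_nonneg[OF assms(1,2)] by (blast intro: in_eigenspace_mx_iter_mono[OF assms(1,2)])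
  then show ?thesis
    using that by blast
qed

lemma Attr_Max_comb:
  assumes "1 \<le> n" "nonneg_mat n M" "finite J" "J \<noteq> {}" "\<And>j. j \<in> J \<Longrightarrow> 0 \<le> c j"
    and "\<And>j. j \<in> J \<Longrightarrow> v j \<in> Attr n M"
    and "\<And>k. k < n \<Longrightarrow> x k = Max ((\<lambda>j. c j * v j k) ` J)"
  shows "x \<in> Attr n M"
proof -
  let ?L = "mx_lambda n M"
  obtain T where T: "\<And>j. j \<in> J \<Longrightarrow> in_eigenspace n M ?L (mx_iter n M T (v j))"
    using Attr_common_time[OF assms(1-3)] assms(6) by blast
  have x: "x \<in> nonneg_vec n"
    unfolding nonneg_vec_def
  proof (intro CollectI allI impI)
    fix k assume "k < n"
    obtain j where "j \<in> J" using assms(4) by blast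
    then have "0 \<le> c j * v j k"
      using assms(5,6) \<open>k < n\<close> by (simp add: Attr_def nonneg_vec_def)
    also have "\<dots> \<le> x k"
      using assms(3,7) \<open>j \<in> J\<close> \<open>k < n\<close> by simp
    finally show "0 \<le> x k" .
  qed
  have comb: "mx_iter n M T x i = Max ((\<lambda>j. c j * mx_iter n M T (v j) i) ` J)" if "i < n" for i
  proof -
    have "mx_iter n M T x i = mx_iter n M T (\<lambda>k. Max ((\<lambda>j. c j * v j k) ` J)) i"
      by (simp only: mx_vec_cong[of n x "\<lambda>k. Max ((\<lambda>j. c j * v j k) ` J)", OF assms(7)])
    also have "\<dots> = Max ((\<lambda>j. c j * mx_iter n M T (v j) i) ` J)"
      by (rule mx_vec_Max_comb[OF assms(1) nonneg_mat_mx_pow[OF assms(2)] that assms(3-5)])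
    finally show ?thesis .
  qed
  have "in_eigenspace n M ?L (\<lambda>i. Max ((\<lambda>j. c j * mx_iter n M T (v j) i) ` J))"
    using assms(1-5) T mx_lambda_nonneg[OF assms(1,2)] by (intro in_eigenspace_Max_comb) auto
  then have "in_eigenspace n M ?L (mx_iter n M T x)"
    using in_eigenspace_cong[of n "mx_iter n M T x", OF comb] by simp
  then show ?thesis
    unfolding Attr_iff_eigenspace[OF assms(1,2)] using x by blast
qed

lemma mx_vec_lipschitz:
  assumes "1 \<le> n" "nonneg_mat n M" "i < n" "\<And>k. k < n \<Longrightarrow> \<bar>y k - x k\<bar> \<le> \<delta>"
  shows "\<bar>mx_vec n M y i - mx_vec n M x i\<bar> \<le> Max ((\<lambda>k. M i k) ` {0..<n}) * \<delta>"
proof -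
  let ?R = "Max ((\<lambda>k. M i k) ` {0..<n})"
  have "0 \<le> \<delta>" using assms(4)[of 0] assms(1) by linarith
  have one_side: "mx_vec n M y i \<le> mx_vec n M x i + ?R * \<delta>"
    if "\<And>k. k < n \<Longrightarrow> y k \<le> x k + \<delta>" for x y
  proof -
    have "M i k * y k \<le> mx_vec n M x i + ?R * \<delta>" if "k < n" for k
    proof -
      have "0 \<le> M i k" "M i k \<le> ?R" using assms(2,3) that by (auto simp: nonneg_mat_def)
      then have "M i k * y k \<le> M i k * x k + M i k * \<delta>"
        using \<open>k < n\<close> \<open>\<And>k. k < n \<Longrightarrow> y k \<le> x k + \<delta>\<close> by (simp add: distrib_left[symmetric] mult_left_mono)
      also have "\<dots> \<le> mx_vec n M x i + ?R * \<delta>"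
        using \<open>M i k \<le> ?R\<close> \<open>0 \<le> \<delta>\<close> \<open>k < n\<close> by (intro add_mono mx_vec_ge mult_right_mono)
      finally show ?thesis .
    qed
    then show ?thesis using assms(1) by (simp add: mx_vec_def[of n M y])
  qed
  show ?thesis
    using one_side[of y x] one_side[of x y] assms(4) by (force simp: abs_le_iff)
qed

lemma eq_0_if_abs_le_mult_pos:
  fixes e C :: real
  assumes "\<And>\<delta>. 0 < \<delta> \<Longrightarrow> \<bar>e\<bar> \<le> C * \<delta>"
  shows "e = 0"
proof (rule ccontr)
  assume "e \<noteq> 0"
  then have "0 < \<bar>e\<bar>" by simp
  have "\<bar>e\<bar> \<le> C * (\<bar>e\<bar> / (\<bar>C\<bar> + 1))"
    using \<open>0 < \<bar>e\<bar>\<close> by (intro assms divide_pos_pos) auto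
  also have "\<dots> = C / (\<bar>C\<bar> + 1) * \<bar>e\<bar>" by simp
  also have "\<dots> < 1 * \<bar>e\<bar>"
    using \<open>0 < \<bar>e\<bar>\<close> abs_ge_self[of C] by (intro mult_strict_right_mono) (auto simp: divide_less_eq_1)
  finally show False by simp
qed

lemma in_eigenspace_mx_iter_closed:
  assumes "1 \<le> n" "nonneg_mat n M" "0 \<le> L" "x \<in> nonneg_vec n"
    and approx: "\<And>\<delta>. 0 < \<delta> \<Longrightarrow>
      \<exists>y \<in> nonneg_vec n. (\<forall>k<n. \<bar>y k - x k\<bar> \<le> \<delta>) \<and> in_eigenspace n M L (mx_iter n M t y)"
  shows "in_eigenspace n M L (mx_iter n M t x)"
  unfolding in_eigenspace_def
proof (intro allI impI)
  fix i assume "i < n"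
  let ?R = "\<lambda>s. Max ((\<lambda>k. mx_pow n M s i k) ` {0..<n})"
  have perturb_bound: "\<bar>a1 - L * a0\<bar> \<le> (R1 + L * R0) * \<delta>"
    if "b1 = L * b0" "\<bar>b1 - a1\<bar> \<le> R1 * \<delta>" "\<bar>b0 - a0\<bar> \<le> R0 * \<delta>" "0 \<le> L"
    for a0 a1 b0 b1 R0 R1 \<delta> :: real
  proof -
    have "\<bar>a1 - L * a0\<bar> \<le> \<bar>b1 - a1\<bar> + \<bar>L * (b0 - a0)\<bar>"
      using that(1) abs_triangle_ineq[of "a1 - b1" "L * (b0 - a0)"] by (simp add: algebra_simps abs_minus_commute)
    also have "\<dots> \<le> R1 * \<delta> + L * (R0 * \<delta>)"
      using that(2-4) by (simp add: abs_mult add_mono mult_left_mono)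
    finally show ?thesis by (simp add: algebra_simps)
  qed
  have "mx_iter n M (Suc t) x i - L * mx_iter n M t x i = 0"
  proof (rule eq_0_if_abs_le_mult_pos)
    fix \<delta> :: real assume "0 < \<delta>"
    then obtain y where y: "y \<in> nonneg_vec n" "\<forall>k<n. \<bar>y k - x k\<bar> \<le> \<delta>"
      and eig: "in_eigenspace n M L (mx_iter n M t y)"
      using approx by blast
    have "mx_iter n M (Suc t) y i = L * mx_iter n M t y i"
      using eig mx_iter_Suc[OF assms(1,2) y(1) \<open>i < n\<close>] \<open>i < n\<close> by (simp add: in_eigenspace_def)
    moreover have dist: "\<bar>mx_iter n M s y i - mx_iter n M s x i\<bar> \<le> ?R s * \<delta>" for s
      using y(2) by (intro mx_vec_lipschitz[OF assms(1) nonneg_mat_mx_pow[OF assms(2)] \<open>i < n\<close>]) auto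
    ultimately show "\<bar>mx_iter n M (Suc t) x i - L * mx_iter n M t x i\<bar> \<le> (?R (Suc t) + L * ?R t) * \<delta>"
      using perturb_bound assms(3) by blast
  qed
  then show "mx_vec n M (mx_iter n M t x) i = L * mx_iter n M t x i"
    using mx_iter_Suc[OF assms(1,2,4) \<open>i < n\<close>] by simp
qed

section \<open>Circulant matrices\<close>

lemma nonneg_mat_circ: "a \<in> nonneg_vec n \<Longrightarrow> nonneg_mat n (circ n a)"
  by (simp add: nonneg_mat_def nonneg_vec_def circ_def)

lemma mod_offset_cancel:
  fixes i d n :: nat
  assumes "i < n" "d < n"
  shows "((i + d) mod n + n - i) mod n = d"
proof -
  have "((i + d) mod n + n - i) mod n = ((i + d) mod n + (n - i)) mod n"
    using assms by (simp only: add_diff_assoc less_imp_le)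
  also have "\<dots> = (i + d + (n - i)) mod n"
    by (rule mod_add_left_eq)
  also have "i + d + (n - i) = d + n"
    using assms by simp
  finally show ?thesis
    using assms by simp
qed

lemma add_mod_offset_cancel:
  fixes i k n :: nat
  assumes "i < n" "k < n"
  shows "(i + (k + n - i) mod n) mod n = k"
  using assms by (simp add: mod_add_right_eq)

lemma mx_vec_circ:
  assumes "i < n"
  shows "mx_vec n (circ n a) y i = Max ((\<lambda>d. a d * y ((i + d) mod n)) ` {0..<n})"
proof -
  have "d \<in> (\<lambda>k. (k + n - i) mod n) ` {0..<n}" if "d < n" for d
    using mod_offset_cancel[OF assms that] assms by (intro image_eqI[of _ _ "(i + d) mod n"]) auto
  then have offsets: "(\<lambda>k. (k + n - i) mod n) ` {0..<n} = {0..<n}"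
    using assms by auto
  have "(\<lambda>d. a d * y ((i + d) mod n)) ` {0..<n}
      = (\<lambda>d. a d * y ((i + d) mod n)) ` (\<lambda>k. (k + n - i) mod n) ` {0..<n}"
    by (simp only: offsets)
  also have "\<dots> = (\<lambda>k. a ((k + n - i) mod n) * y k) ` {0..<n}"
    unfolding image_image using assms by (intro image_cong) (auto simp: add_mod_offset_cancel)
  finally show ?thesis
    by (simp add: mx_vec_def circ_def)
qed

lemma mx_vec_circ_ge: "i < n \<Longrightarrow> d < n \<Longrightarrow> a d * y ((i + d) mod n) \<le> mx_vec n (circ n a) y i"
  unfolding mx_vec_circ by (intro Max_ge) auto

lemma mx_vec_circ_attained:
  assumes "i < n"
  obtains d where "d < n" "mx_vec n (circ n a) y i = a d * y ((i + d) mod n)"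
proof -
  have "mx_vec n (circ n a) y i \<in> (\<lambda>d. a d * y ((i + d) mod n)) ` {0..<n}"
    unfolding mx_vec_circ[OF assms] using assms by (intro Max_in) auto
  then show ?thesis using that by auto
qed

lemma mx_vec_circ_rotate:
  assumes "i < n"
  shows "mx_vec n (circ n a) (\<lambda>j. y ((j + s) mod n)) i = mx_vec n (circ n a) y ((i + s) mod n)"
proof -
  have "((i + d) mod n + s) mod n = ((i + s) mod n + d) mod n" for d
    by (metis mod_add_left_eq add.assoc add.commute)
  moreover have "(i + s) mod n < n"
    using assms by simp
  ultimately show ?thesis
    using assms by (simp add: mx_vec_circ)
qed

(* A walk from i in the digraph of circ n a is given by its list of offsets:
   a step with offset d leads from j to (j + d) mod n and has weight a d. *)
definition walk_weight :: "nat \<Rightarrow> (nat \<Rightarrow> real) \<Rightarrow> (nat \<Rightarrow> real) \<Rightarrow> nat \<Rightarrow> nat list \<Rightarrow> real" where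
  "walk_weight n a y i s = prod_list (map a s) * y ((i + sum_list s) mod n)"

lemma walk_weight_Cons: "walk_weight n a y i (d # s) = a d * walk_weight n a y ((i + d) mod n) s"
  by (simp add: walk_weight_def mod_add_left_eq add.assoc)

lemma walk_weight_le_mx_iter_circ:
  assumes "a \<in> nonneg_vec n" "y \<in> nonneg_vec n" "i < n" "set s \<subseteq> {..<n}"
  shows "walk_weight n a y i s \<le> mx_iter n (circ n a) (length s) y i"
  using assms(3,4)
proof (induction s arbitrary: i)
  case Nil
  then show ?case
    using mx_iter_0[OF assms(2)] by (simp add: walk_weight_def)
next
  case (Cons d s)
  have "1 \<le> n" "(i + d) mod n < n" "d < n"
    using Cons.prems by auto
  have "walk_weight n a y i (d # s) \<le> a d * mx_iter n (circ n a) (length s) y ((i + d) mod n)"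
    unfolding walk_weight_Cons using Cons \<open>(i + d) mod n < n\<close> \<open>d < n\<close> assms(1)
    by (intro mult_left_mono) (auto simp: nonneg_vec_def)
  also have "\<dots> \<le> mx_vec n (circ n a) (mx_iter n (circ n a) (length s) y) i"
    using Cons.prems \<open>d < n\<close> by (intro mx_vec_circ_ge)
  also have "\<dots> = mx_iter n (circ n a) (length (d # s)) y i"
    using mx_iter_Suc[OF \<open>1 \<le> n\<close> nonneg_mat_circ[OF assms(1)] assms(2) Cons.prems(1)] by simp
  finally show ?case .
qed

lemma mx_iter_circ_eq_walk_weight:
  assumes "a \<in> nonneg_vec n" "y \<in> nonneg_vec n" "i < n"
  obtains s where "set s \<subseteq> {..<n}" "length s = m" "mx_iter n (circ n a) m y i = walk_weight n a y i s"
proof -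
  have "\<exists>s. set s \<subseteq> {..<n} \<and> length s = m \<and> mx_iter n (circ n a) m y i = walk_weight n a y i s"
    using assms(3)
  proof (induction m arbitrary: i)
    case 0
    then show ?case
      using mx_iter_0[OF assms(2)] by (intro exI[of _ "[]"]) (simp add: walk_weight_def)
  next
    case (Suc m)
    obtain d where d: "d < n" "mx_vec n (circ n a) (mx_iter n (circ n a) m y) i
        = a d * mx_iter n (circ n a) m y ((i + d) mod n)"
      using mx_vec_circ_attained[OF Suc.prems] by blast
    obtain s where s: "set s \<subseteq> {..<n}" "length s = m"
      "mx_iter n (circ n a) m y ((i + d) mod n) = walk_weight n a y ((i + d) mod n) s"
      using Suc.IH[of "(i + d) mod n"] Suc.prems by auto
    have "mx_iter n (circ n a) (Suc m) y i = walk_weight n a y i (d # s)"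
      using mx_iter_Suc[OF _ nonneg_mat_circ[OF assms(1)] assms(2) Suc.prems] Suc.prems d s
      by (simp add: walk_weight_Cons)
    then show ?case
      using d s by (intro exI[of _ "d # s"]) auto
  qed
  then show ?thesis
    using that by blast
qed

lemma walk_segment_pigeonhole:
  fixes s :: "nat list"
  assumes "1 \<le> n" "n \<le> length s"
  obtains u v w where "s = u @ v @ w" "v \<noteq> []" "sum_list v mod n = (length v * k) mod n"
proof -
  define f where "f r = (int (sum_list (take r s)) - int r * int k) mod int n" for r
  have "f ` {0..n} \<subseteq> {0..<int n}"
    using assms by (auto simp: f_def)
  then have "card (f ` {0..n}) < card {0..n}"
    using card_mono[of "{0..<int n}" "f ` {0..n}"] by simp
  then have "\<not> inj_on f {0..n}"
    by (rule pigeonhole)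
  then obtain a b where ab: "a < b" "b \<le> n" "f a = f b"
    unfolding inj_on_def by (metis atLeastAtMost_iff linorder_neq_iff)
  define v where "v = drop a (take b s)"
  have take_b: "take b s = take a s @ v"
    unfolding v_def using ab by (metis append_take_drop_id min.strict_order_iff take_take)
  have split: "s = take a s @ v @ drop b s"
    using take_b by (metis append.assoc append_take_drop_id)
  have len_v: "length v = b - a"
    unfolding v_def using ab assms by simp
  have "int n dvd (int (sum_list (take b s)) - int b * int k) - (int (sum_list (take a s)) - int a * int k)"
    using ab(3)[symmetric] unfolding f_def by (simp add: mod_eq_dvd_iff)
  also have "(int (sum_list (take b s)) - int b * int k) - (int (sum_list (take a s)) - int a * int k)
      = int (sum_list v) - int (length v * k)"
    using take_b len_v ab by (simp add: of_nat_diff algebra_simps)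
  finally have "sum_list v mod n = (length v * k) mod n"
    by (metis of_nat_mod mod_eq_dvd_iff of_nat_eq_iff)
  moreover have "v \<noteq> []"
    using len_v ab by auto
  ultimately show ?thesis
    using split that by blast
qed

lemma prod_list_map_le_power:
  fixes f :: "'a \<Rightarrow> 'b::linordered_semidom"
  assumes "\<And>x. x \<in> set xs \<Longrightarrow> 0 \<le> f x \<and> f x \<le> c"
  shows "prod_list (map f xs) \<le> c ^ length xs"
  using assms
proof (induction xs)
  case (Cons x xs)
  have "0 \<le> f x" "f x \<le> c" "0 \<le> prod_list (map f xs)"
    using Cons.prems by (auto intro!: prod_list_nonneg)
  moreover have "0 \<le> c"
    using \<open>0 \<le> f x\<close> \<open>f x \<le> c\<close> by (rule order_trans)
  ultimately show ?case
    using Cons by (auto intro!: mult_mono)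
qed simp

lemma walk_weight_compress:
  assumes "a \<in> nonneg_vec n" "y \<in> nonneg_vec n" "k < n" "\<forall>t<n. a t \<le> a k"
    and "set s \<subseteq> {..<n}" "n \<le> length s"
  obtains s' where "set s' \<subseteq> {..<n}" "length s' = length s - 1"
    "walk_weight n a y i s \<le> a k * walk_weight n a y ((i + k) mod n) s'"
proof -
  obtain u v w where uvw: "s = u @ v @ w" "v \<noteq> []" "sum_list v mod n = (length v * k) mod n"
    using walk_segment_pigeonhole[of n s k] assms(3,6) by auto
  \<comment> \<open>As sum v = length v * k modulo n, replacing v by k-steps keeps the endpoint; one of
    them is moved to the front of the walk.\<close>
  define s' where "s' = u @ replicate (length v - 1) k @ w"
  have a_nonneg: "0 \<le> a t" if "t \<in> set s" for t
    using assms(1,5) that by (auto simp: nonneg_vec_def)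
  have len_v: "length v = Suc (length v - 1)"
    using uvw(2) by simp
  have "prod_list (map a s) = prod_list (map a u) * prod_list (map a v) * prod_list (map a w)"
    using uvw(1) by simp
  also have "\<dots> \<le> prod_list (map a u) * a k ^ length v * prod_list (map a w)"
    using a_nonneg uvw(1) assms(4,5)
    by (intro mult_right_mono mult_left_mono prod_list_map_le_power prod_list_nonneg) auto
  also have "\<dots> = a k * prod_list (map a s')"
    by (subst len_v) (simp add: s'_def sum_list_replicate)
  finally have prod: "prod_list (map a s) \<le> a k * prod_list (map a s')" .
  have "(i + sum_list s) mod n = (i + sum_list u + sum_list w + sum_list v) mod n"
    using uvw(1) by (simp add: algebra_simps)
  also have "\<dots> = (i + sum_list u + sum_list w + length v * k) mod n"
    using uvw(3) by (metis mod_add_right_eq)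
  also have "i + sum_list u + sum_list w + length v * k = i + k + sum_list s'"
    by (subst len_v) (simp add: s'_def sum_list_replicate)
  also have "(i + k + sum_list s') mod n = ((i + k) mod n + sum_list s') mod n"
    by (simp add: mod_add_left_eq)
  finally have endpoint: "(i + sum_list s) mod n = ((i + k) mod n + sum_list s') mod n" .
  have "0 \<le> y (((i + k) mod n + sum_list s') mod n)"
    using assms(2,3) by (simp add: nonneg_vec_def)
  then have "walk_weight n a y i s \<le> a k * walk_weight n a y ((i + k) mod n) s'"
    unfolding walk_weight_def endpoint mult.assoc[symmetric] by (rule mult_right_mono[OF prod])
  moreover have "set s' \<subseteq> {..<n}" "length s' = length s - 1"
    using assms(3,5) uvw(1) len_v by (auto simp: s'_def)
  ultimately show ?thesis
    using that by blast
qed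

lemma mx_iter_circ_Suc_eq_rotate:
  assumes "a \<in> nonneg_vec n" "y \<in> nonneg_vec n" "k < n" "\<forall>t<n. a t \<le> a k" "i < n" "n \<le> Suc m"
  shows "mx_iter n (circ n a) (Suc m) y i = a k * mx_iter n (circ n a) m y ((i + k) mod n)"
proof (rule antisym)
  obtain s where s: "set s \<subseteq> {..<n}" "length s = Suc m"
    "mx_iter n (circ n a) (Suc m) y i = walk_weight n a y i s"
    using mx_iter_circ_eq_walk_weight[OF assms(1,2,5)] by blast
  then obtain s' where s': "set s' \<subseteq> {..<n}" "length s' = m"
    "walk_weight n a y i s \<le> a k * walk_weight n a y ((i + k) mod n) s'"
    using walk_weight_compress[OF assms(1-4)] assms(6) by (metis diff_Suc_1)
  have "walk_weight n a y ((i + k) mod n) s' \<le> mx_iter n (circ n a) m y ((i + k) mod n)"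
    using walk_weight_le_mx_iter_circ[OF assms(1,2) _ s'(1)] assms(3) s'(2) by simp
  then have "a k * walk_weight n a y ((i + k) mod n) s' \<le> a k * mx_iter n (circ n a) m y ((i + k) mod n)"
    using assms(1,3) by (intro mult_left_mono) (auto simp: nonneg_vec_def)
  then show "mx_iter n (circ n a) (Suc m) y i \<le> a k * mx_iter n (circ n a) m y ((i + k) mod n)"
    using s(3) s'(3) by linarith
  show "a k * mx_iter n (circ n a) m y ((i + k) mod n) \<le> mx_iter n (circ n a) (Suc m) y i"
    using mx_vec_circ_ge[OF assms(5,3)] mx_iter_Suc[OF _ nonneg_mat_circ[OF assms(1)] assms(2,5)] assms(5)
    by simp
qed

definition shift_invariant :: "nat \<Rightarrow> nat \<Rightarrow> (nat \<Rightarrow> real) \<Rightarrow> bool" where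
  "shift_invariant n k v \<longleftrightarrow> (\<forall>i<n. v ((i + k) mod n) = v i)"

lemma in_eigenspace_circ_iff_shift_invariant:
  assumes "a \<in> nonneg_vec n" "y \<in> nonneg_vec n" "k < n" "\<forall>t<n. a t \<le> a k" "0 < a k" "n \<le> Suc m"
  shows "in_eigenspace n (circ n a) (a k) (mx_iter n (circ n a) m y)
    \<longleftrightarrow> shift_invariant n k (mx_iter n (circ n a) m y)"
proof -
  have "mx_vec n (circ n a) (mx_iter n (circ n a) m y) i = a k * mx_iter n (circ n a) m y ((i + k) mod n)"
    if "i < n" for i
    using mx_iter_Suc[OF _ nonneg_mat_circ[OF assms(1)] assms(2) that]
      mx_iter_circ_Suc_eq_rotate[OF assms(1-4) that assms(6)] that by simp
  then show ?thesis
    using assms(5) by (simp add: in_eigenspace_def shift_invariant_def)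
qed

lemma shift_invariant_mx_iter_circ_pred:
  assumes "a \<in> nonneg_vec n" "y \<in> nonneg_vec n" "k < n" "\<forall>t<n. a t \<le> a k" "0 < a k" "n \<le> Suc m"
    and "shift_invariant n k (mx_iter n (circ n a) (Suc m) y)"
  shows "shift_invariant n k (mx_iter n (circ n a) m y)"
  unfolding shift_invariant_def
proof (intro allI impI)
  fix j assume "j < n"
  let ?v = "mx_iter n (circ n a) m y"
  define i where "i = (j + n - k) mod n"
  have "i < n" "(i + k) mod n = j"
    using \<open>j < n\<close> assms(3) add_mod_offset_cancel[OF assms(3) \<open>j < n\<close>] by (auto simp: i_def add.commute)
  have "a k * ?v ((j + k) mod n) = mx_iter n (circ n a) (Suc m) y j"
    using mx_iter_circ_Suc_eq_rotate[OF assms(1-4) \<open>j < n\<close> assms(6)] by simp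
  also have "\<dots> = mx_iter n (circ n a) (Suc m) y i"
    using assms(7) \<open>i < n\<close> \<open>(i + k) mod n = j\<close> by (auto simp: shift_invariant_def)
  also have "\<dots> = a k * ?v j"
    using mx_iter_circ_Suc_eq_rotate[OF assms(1-4) \<open>i < n\<close> assms(6)] \<open>(i + k) mod n = j\<close> by simp
  finally show "?v ((j + k) mod n) = ?v j"
    using assms(5) by simp
qed

lemma in_eigenspace_circ_zero:
  assumes "\<forall>t<n. a t = 0"
  shows "in_eigenspace n (circ n a) 0 v"
  unfolding in_eigenspace_def
proof (intro allI impI)
  fix i assume "i < n"
  then have "(\<lambda>d. a d * v ((i + d) mod n)) ` {0..<n} = {0}"
    using assms by auto
  then show "mx_vec n (circ n a) v i = 0 * v i"
    using \<open>i < n\<close> by (simp add: mx_vec_circ)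
qed

lemma in_eigenspace_circ_mx_iter_n_minus_1:
  assumes "a \<in> nonneg_vec n" "y \<in> nonneg_vec n" "k < n" "\<forall>t<n. a t \<le> a k"
    and "in_eigenspace n (circ n a) (a k) (mx_iter n (circ n a) t y)"
  shows "in_eigenspace n (circ n a) (a k) (mx_iter n (circ n a) (n - 1) y)"
proof (cases "a k = 0")
  case True
  then have "\<forall>t<n. a t = 0"
    using assms(1,4) by (auto simp: nonneg_vec_def intro: antisym)
  then show ?thesis
    using True in_eigenspace_circ_zero by metis
next
  case False
  then have "0 < a k"
    using assms(1,3) by (simp add: nonneg_vec_def order_less_le)
  have "1 \<le> n"
    using assms(3) by simp
  note shift_iff = in_eigenspace_circ_iff_shift_invariant[OF assms(1-4) \<open>0 < a k\<close>]
  have "in_eigenspace n (circ n a) (a k) (mx_iter n (circ n a) (n - 1 + t) y)"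
    using in_eigenspace_mx_iter_mono[OF \<open>1 \<le> n\<close> nonneg_mat_circ[OF assms(1)] _ assms(2) _ assms(5)]
      \<open>0 < a k\<close> by simp
  then have "shift_invariant n k (mx_iter n (circ n a) (n - 1 + t) y)"
    using shift_iff by simp
  then have "shift_invariant n k (mx_iter n (circ n a) (n - 1) y)"
  proof (induction t)
    case (Suc t)
    then show ?case
      using shift_invariant_mx_iter_circ_pred[OF assms(1-4) \<open>0 < a k\<close>, of "n - 1 + t"] by simp
  qed simp
  then show ?thesis
    using shift_iff by simp
qed

lemma mx_lambda_circ:
  assumes "a \<in> nonneg_vec n" "k < n" "\<forall>t<n. a t \<le> a k"
  shows "mx_lambda n (circ n a) = a k"
  unfolding mx_lambda_def
proof (rule Max_eqI[OF finite_cycle_means])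
  have "0 \<le> a k"
    using assms(1,2) by (simp add: nonneg_vec_def)
  define c where "c j = (j * k) mod n" for j
  have "c (Suc j mod n) = (c j + k) mod n" for j
    unfolding c_def by (metis mod_mult_left_eq mod_add_left_eq mult_Suc add.commute)
  then have "circ n a (c j) (c (Suc j mod n)) = a k" for j
    using mod_offset_cancel[of "c j" n k] assms(2) by (simp add: circ_def c_def)
  then have "root n (\<Prod>j<n. circ n a (c j) (c (Suc j mod n))) = a k"
    using assms(2) \<open>0 \<le> a k\<close> by (simp add: real_root_power_cancel)
  moreover have "\<forall>j<n. c j < n"
    using assms(2) by (simp add: c_def)
  ultimately show "a k \<in> {root l (\<Prod>j<l. circ n a (c j) (c (Suc j mod l))) | l c.
      1 \<le> l \<and> l \<le> n \<and> (\<forall>j<l. c j < n)}"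
    using assms(2) by (intro CollectI exI[of _ n] exI[of _ c]) auto
next
  fix x assume "x \<in> {root l (\<Prod>j<l. circ n a (c j) (c (Suc j mod l))) | l c.
      1 \<le> l \<and> l \<le> n \<and> (\<forall>j<l. c j < n)}"
  then obtain l c where x: "x = root l (\<Prod>j<l. circ n a (c j) (c (Suc j mod l)))" "1 \<le> l" "l \<le> n"
    by blast
  have "0 \<le> circ n a i j \<and> circ n a i j \<le> a k" for i j
    using assms by (simp add: circ_def nonneg_vec_def)
  then have "(\<Prod>j<l. circ n a (c j) (c (Suc j mod l))) \<le> a k ^ l"
    using prod_mono[of "{..<l}" "\<lambda>j. circ n a (c j) (c (Suc j mod l))" "\<lambda>_. a k"] by simp
  then have "x \<le> root l (a k ^ l)"
    using x by (simp add: real_root_le_mono)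
  also have "\<dots> = a k"
    using x(2) assms(1,2) by (intro real_root_power_cancel) (auto simp: nonneg_vec_def)
  finally show "x \<le> a k" .
qed

lemma Attr_circ_iff:
  assumes "a \<in> nonneg_vec n" "k < n" "\<forall>t<n. a t \<le> a k"
  shows "x \<in> Attr n (circ n a) \<longleftrightarrow>
    x \<in> nonneg_vec n \<and> in_eigenspace n (circ n a) (a k) (mx_iter n (circ n a) (n - 1) x)"
  using Attr_iff_eigenspace[OF _ nonneg_mat_circ[OF assms(1)]] assms(2)
    in_eigenspace_circ_mx_iter_n_minus_1[OF assms(1) _ assms(2,3)]
  by (auto simp: mx_lambda_circ[OF assms])

lemma mx_iter_circ_rotate:
  assumes "a \<in> nonneg_vec n" "y \<in> nonneg_vec n" "i < n"
  shows "mx_iter n (circ n a) m (\<lambda>j. y ((j + s) mod n)) i = mx_iter n (circ n a) m y ((i + s) mod n)"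
  using assms(3)
proof (induction m arbitrary: i)
  case 0
  have "(\<lambda>j. y ((j + s) mod n)) \<in> nonneg_vec n"
    using assms(2) 0 by (simp add: nonneg_vec_def)
  then show ?case
    using mx_iter_0[OF assms(2)] mx_iter_0 0 by simp
next
  case (Suc m)
  have "1 \<le> n" "(\<lambda>j. y ((j + s) mod n)) \<in> nonneg_vec n" "(i + s) mod n < n"
    using assms(2) Suc.prems by (auto simp: nonneg_vec_def)
  note iter_Suc = mx_iter_Suc[OF \<open>1 \<le> n\<close> nonneg_mat_circ[OF assms(1)]]
  have "mx_iter n (circ n a) (Suc m) (\<lambda>j. y ((j + s) mod n)) i
      = mx_vec n (circ n a) (mx_iter n (circ n a) m (\<lambda>j. y ((j + s) mod n))) i"
    using iter_Suc[OF \<open>(\<lambda>j. y ((j + s) mod n)) \<in> nonneg_vec n\<close> Suc.prems] .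
  also have "\<dots> = mx_vec n (circ n a) (\<lambda>j. mx_iter n (circ n a) m y ((j + s) mod n)) i"
    by (simp only: mx_vec_cong[OF Suc.IH])
  also have "\<dots> = mx_vec n (circ n a) (mx_iter n (circ n a) m y) ((i + s) mod n)"
    using Suc.prems by (rule mx_vec_circ_rotate)
  also have "\<dots> = mx_iter n (circ n a) (Suc m) y ((i + s) mod n)"
    using iter_Suc[OF assms(2) \<open>(i + s) mod n < n\<close>] by simp
  finally show ?case .
qed

lemma shift_invariant_mx_iter_circ:
  assumes "a \<in> nonneg_vec n" "z \<in> nonneg_vec n" "shift_invariant n k z"
  shows "shift_invariant n k (mx_iter n (circ n a) m z)"
  unfolding shift_invariant_def
proof (intro allI impI)
  fix i assume "i < n"
  have "mx_iter n (circ n a) m z ((i + k) mod n) = mx_iter n (circ n a) m (\<lambda>j. z ((j + k) mod n)) i"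
    using mx_iter_circ_rotate[OF assms(1,2) \<open>i < n\<close>] by simp
  also have "\<dots> = mx_iter n (circ n a) m z i"
    using assms(3) by (simp only: mx_vec_cong[of n "\<lambda>j. z ((j + k) mod n)" z] shift_invariant_def)
  finally show "mx_iter n (circ n a) m z ((i + k) mod n) = mx_iter n (circ n a) m z i" .
qed

lemma mx_vec_circ_scaled_mono:
  assumes "0 \<le> c" "0 \<le> c'" "\<forall>t<n. c * a t \<le> c' * b t" "w \<in> nonneg_vec n" "j < n"
  shows "c * mx_vec n (circ n a) w j \<le> c' * mx_vec n (circ n b) w j"
proof -
  obtain d where d: "d < n" "mx_vec n (circ n a) w j = a d * w ((j + d) mod n)"
    using mx_vec_circ_attained[OF assms(5)] by blast
  have "0 \<le> w ((j + d) mod n)"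
    using assms(4,5) by (simp add: nonneg_vec_def)
  then have "c * mx_vec n (circ n a) w j \<le> c' * (b d * w ((j + d) mod n))"
    using d assms(3) by (simp add: mult.assoc[symmetric] mult_right_mono)
  also have "\<dots> \<le> c' * mx_vec n (circ n b) w j"
    using assms(2,5) d(1) by (intro mult_left_mono mx_vec_circ_ge)
  finally show ?thesis .
qed

(* In matrix form a_k B^(N+1) = b_k B^N A for A = circ n a, B = circ n b and P the rotation by k:
   "<=" as B^(N+1) = b_k B^N P and A >= a_k P, ">=" as b_k A <= a_k B entrywise. *)
lemma mx_iter_circ_compare_step:
  assumes "a \<in> nonneg_vec n" "b \<in> nonneg_vec n" "k < n" "\<forall>t<n. a t \<le> a k" "\<forall>t<n. b t \<le> b k"
    and "\<forall>t<n. b k * a t \<le> a k * b t" "w \<in> nonneg_vec n" "i < n" "n \<le> Suc N"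
  shows "a k * mx_iter n (circ n b) (Suc N) w i = b k * mx_iter n (circ n b) N (mx_vec n (circ n a) w) i"
proof -
  have "1 \<le> n" "0 \<le> a k" "0 \<le> b k"
    using assms(1-3) by (auto simp: nonneg_vec_def)
  have pow_nonneg: "nonneg_mat n (mx_pow n (circ n b) N)"
    using nonneg_mat_mx_pow[OF nonneg_mat_circ[OF assms(2)]] .
  show ?thesis
  proof (rule antisym)
    have "a k * mx_iter n (circ n b) N w ((i + k) mod n)
        = mx_iter n (circ n b) N (\<lambda>j. a k * w ((j + k) mod n)) i"
      using mx_iter_circ_rotate[OF assms(2,7,8)] mx_vec_scale[OF \<open>1 \<le> n\<close> \<open>0 \<le> a k\<close>] by simp
    also have "\<dots> \<le> mx_iter n (circ n b) N (mx_vec n (circ n a) w) i"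
      using assms(3,8) by (intro mx_vec_mono[OF \<open>1 \<le> n\<close> pow_nonneg] mx_vec_circ_ge)
    finally have "a k * mx_iter n (circ n b) N w ((i + k) mod n)
        \<le> mx_iter n (circ n b) N (mx_vec n (circ n a) w) i" .
    then have le: "b k * (a k * mx_iter n (circ n b) N w ((i + k) mod n))
        \<le> b k * mx_iter n (circ n b) N (mx_vec n (circ n a) w) i"
      using \<open>0 \<le> b k\<close> by (rule mult_left_mono)
    have eq: "a k * mx_iter n (circ n b) (Suc N) w i = b k * (a k * mx_iter n (circ n b) N w ((i + k) mod n))"
      by (simp only: mx_iter_circ_Suc_eq_rotate[OF assms(2,7,3,5,8,9)] mult.left_commute)
    show "a k * mx_iter n (circ n b) (Suc N) w i \<le> b k * mx_iter n (circ n b) N (mx_vec n (circ n a) w) i"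
      using eq le by (rule ord_eq_le_trans)
  next
    have "b k * mx_iter n (circ n b) N (mx_vec n (circ n a) w) i
        = mx_iter n (circ n b) N (\<lambda>j. b k * mx_vec n (circ n a) w j) i"
      using mx_vec_scale[OF \<open>1 \<le> n\<close> \<open>0 \<le> b k\<close>] by simp
    also have "\<dots> \<le> mx_iter n (circ n b) N (\<lambda>j. a k * mx_vec n (circ n b) w j) i"
      using assms(6,7,8) \<open>0 \<le> a k\<close> \<open>0 \<le> b k\<close>
      by (intro mx_vec_mono[OF \<open>1 \<le> n\<close> pow_nonneg] mx_vec_circ_scaled_mono) auto
    also have "\<dots> = a k * mx_iter n (circ n b) N (mx_vec n (circ n b) w) i"
      using mx_vec_scale[OF \<open>1 \<le> n\<close> \<open>0 \<le> a k\<close>] by simp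
    also have "\<dots> = a k * mx_iter n (circ n b) (Suc N) w i"
      using mx_iter_Suc'[OF \<open>1 \<le> n\<close> nonneg_mat_circ[OF assms(2)] assms(7,8)] by simp
    finally show "b k * mx_iter n (circ n b) N (mx_vec n (circ n a) w) i \<le> a k * mx_iter n (circ n b) (Suc N) w i" .
  qed
qed

lemma mx_iter_circ_compare:
  assumes "a \<in> nonneg_vec n" "b \<in> nonneg_vec n" "k < n" "\<forall>t<n. a t \<le> a k" "\<forall>t<n. b t \<le> b k"
    and "\<forall>t<n. b k * a t \<le> a k * b t" "y \<in> nonneg_vec n" "i < n" "n \<le> Suc N"
  shows "b k ^ j * mx_iter n (circ n b) N (mx_iter n (circ n a) j y) i = a k ^ j * mx_iter n (circ n b) (N + j) y i"
  using assms(8)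
proof (induction j arbitrary: i)
  case 0
  have "mx_iter n (circ n b) N (mx_iter n (circ n a) 0 y) = mx_iter n (circ n b) N y"
    using mx_iter_0[OF assms(7)] by (rule mx_vec_cong)
  then show ?case
    by simp
next
  case (Suc j)
  have "1 \<le> n" "0 \<le> a k" "0 \<le> b k"
    using assms(1-3) by (auto simp: nonneg_vec_def)
  let ?A = "circ n a" and ?B = "circ n b"
  let ?z = "mx_iter n ?A j y"
  have z: "?z \<in> nonneg_vec n"
    using mx_iter_nonneg[OF \<open>1 \<le> n\<close> nonneg_mat_circ[OF assms(1)] assms(7)] .
  have "mx_iter n ?B N (mx_iter n ?A (Suc j) y) = mx_iter n ?B N (mx_vec n ?A ?z)"
    using mx_iter_Suc[OF \<open>1 \<le> n\<close> nonneg_mat_circ[OF assms(1)] assms(7)] by (rule mx_vec_cong)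
  then have "b k ^ Suc j * mx_iter n ?B N (mx_iter n ?A (Suc j) y) i
      = b k ^ j * (b k * mx_iter n ?B N (mx_vec n ?A ?z) i)"
    by (simp add: mult_ac)
  also have "\<dots> = b k ^ j * (a k * mx_iter n ?B (Suc N) ?z i)"
    using mx_iter_circ_compare_step[OF assms(1-6) z Suc.prems assms(9)] by simp
  also have "\<dots> = a k * mx_vec n ?B (\<lambda>l. b k ^ j * mx_iter n ?B N ?z l) i"
    using mx_iter_Suc[OF \<open>1 \<le> n\<close> nonneg_mat_circ[OF assms(2)] z Suc.prems, of N]
      mx_vec_scale[OF \<open>1 \<le> n\<close> zero_le_power[OF \<open>0 \<le> b k\<close>]] by simp
  also have "\<dots> = a k * mx_vec n ?B (\<lambda>l. a k ^ j * mx_iter n ?B (N + j) y l) i"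
    by (simp only: mx_vec_cong[OF Suc.IH])
  also have "\<dots> = a k ^ Suc j * mx_iter n ?B (N + Suc j) y i"
    using mx_iter_Suc[OF \<open>1 \<le> n\<close> nonneg_mat_circ[OF assms(2)] assms(7) Suc.prems, of "N + j"]
      mx_vec_scale[OF \<open>1 \<le> n\<close> zero_le_power[OF \<open>0 \<le> a k\<close>]] by simp
  finally show ?case .
qed

lemma shift_invariant_transfer:
  assumes "a \<in> nonneg_vec n" "b \<in> nonneg_vec n" "k < n" "\<forall>t<n. a t \<le> a k" "\<forall>t<n. b t \<le> b k"
    and "\<forall>t<n. b k * a t \<le> a k * b t" "0 < a k" "y \<in> nonneg_vec n"
    and "shift_invariant n k (mx_iter n (circ n a) (n - 1) y)"
  shows "shift_invariant n k (mx_iter n (circ n b) (n - 1 + (n - 1)) y)"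
  unfolding shift_invariant_def
proof (intro allI impI)
  let ?N = "n - 1"
  let ?z = "mx_iter n (circ n b) ?N (mx_iter n (circ n a) ?N y)"
  have "1 \<le> n" "n \<le> Suc ?N"
    using assms(3) by auto
  have inv: "shift_invariant n k ?z"
    using assms(9)
    by (intro shift_invariant_mx_iter_circ[OF assms(2)] mx_iter_nonneg[OF \<open>1 \<le> n\<close> nonneg_mat_circ[OF assms(1)] assms(8)])
  note compare = mx_iter_circ_compare[OF assms(1-6,8) _ \<open>n \<le> Suc ?N\<close>, where j = ?N]
  fix i assume "i < n"
  then have "(i + k) mod n < n"
    by simp
  have "a k ^ ?N * mx_iter n (circ n b) (?N + ?N) y ((i + k) mod n) = b k ^ ?N * ?z ((i + k) mod n)"
    by (rule compare[OF \<open>(i + k) mod n < n\<close>, symmetric])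
  also have "\<dots> = b k ^ ?N * ?z i"
    using inv \<open>i < n\<close> unfolding shift_invariant_def by simp
  also have "\<dots> = a k ^ ?N * mx_iter n (circ n b) (?N + ?N) y i"
    by (rule compare[OF \<open>i < n\<close>])
  finally show "mx_iter n (circ n b) (?N + ?N) y ((i + k) mod n) = mx_iter n (circ n b) (?N + ?N) y i"
    using assms(7) by simp
qed

lemma Attr_circ_mono:
  assumes "a \<in> nonneg_vec n" "b \<in> nonneg_vec n" "k < n" "\<forall>t<n. a t \<le> a k" "\<forall>t<n. b t \<le> b k"
    and "b k \<le> a k" "\<forall>t<n. b k * a t \<le> a k * b t"
  shows "Attr n (circ n a) \<subseteq> Attr n (circ n b)"
proof
  fix y assume "y \<in> Attr n (circ n a)"
  then have y: "y \<in> nonneg_vec n"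
    and eig_a: "in_eigenspace n (circ n a) (a k) (mx_iter n (circ n a) (n - 1) y)"
    using Attr_circ_iff[OF assms(1,3,4)] by auto
  show "y \<in> Attr n (circ n b)"
  proof (cases "b k = 0")
    case True
    then have "\<forall>t<n. b t = 0"
      using assms(2,5) by (auto simp: nonneg_vec_def intro: antisym)
    then show ?thesis
      using Attr_circ_iff[OF assms(2,3,5)] y True in_eigenspace_circ_zero by metis
  next
    case False
    then have "0 < b k" "0 < a k"
      using assms(2,3,6) by (auto simp: nonneg_vec_def order_less_le)
    then have "shift_invariant n k (mx_iter n (circ n a) (n - 1) y)"
      using eig_a in_eigenspace_circ_iff_shift_invariant[OF assms(1) y assms(3,4)] by simp
    then have "shift_invariant n k (mx_iter n (circ n b) (n - 1 + (n - 1)) y)"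
      by (rule shift_invariant_transfer[OF assms(1-5,7) \<open>0 < a k\<close> y])
    then have "in_eigenspace n (circ n b) (b k) (mx_iter n (circ n b) (n - 1 + (n - 1)) y)"
      using in_eigenspace_circ_iff_shift_invariant[OF assms(2) y assms(3,5) \<open>0 < b k\<close>] by simp
    moreover have "1 \<le> n"
      using assms(3) by simp
    ultimately show ?thesis
      using Attr_iff_eigenspace[OF _ nonneg_mat_circ[OF assms(2)]] y
      by (auto simp: mx_lambda_circ[OF assms(2,3,5)])
  qed
qed

section \<open>Interval vectors and interval circulants\<close>

lemma ex_argmax:
  fixes a :: "nat \<Rightarrow> 'a::linorder"
  assumes "1 \<le> n"
  obtains k where "k < n" "\<forall>t<n. a t \<le> a k" "Max (a ` {0..<n}) = a k"
proof -
  have "Max (a ` {0..<n}) \<in> a ` {0..<n}"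
    using assms by (intro Max_in) auto
  then obtain k where "k < n" "a k = Max (a ` {0..<n})"
    by auto
  then show ?thesis
    using that by simp
qed

lemma ivl_bounds: "v \<in> ivl lo hi cl cr \<Longrightarrow> lo \<le> v \<and> v \<le> hi"
  by (auto simp: ivl_def split: if_splits)

lemma ivl_endpoint_approx:
  assumes "ivl_ok lo hi cl cr" "0 < \<delta>" "p = lo \<or> p = hi"
  obtains v where "v \<in> ivl lo hi cl cr" "\<bar>v - p\<bar> \<le> \<delta>"
proof (cases "lo = hi")
  case True
  obtain v where "v \<in> ivl lo hi cl cr"
    using assms(1) by (auto simp: ivl_ok_def)
  moreover have "v = p"
    using ivl_bounds[OF \<open>v \<in> ivl lo hi cl cr\<close>] True assms(3) by auto
  ultimately show ?thesis
    using that assms(2) by simp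
next
  case False
  then have "lo < hi"
    using assms(1) by (simp add: ivl_ok_def)
  define e where "e = min \<delta> ((hi - lo) / 2)"
  have "0 < e"
    using \<open>lo < hi\<close> assms(2) by (simp add: e_def)
  have "e \<le> \<delta>" "e \<le> (hi - lo) / 2"
    unfolding e_def by (rule min.cobounded1, rule min.cobounded2)
  define v where "v = (if p = lo then lo + e else hi - e)"
  have "lo < v" "v < hi" "\<bar>v - p\<bar> \<le> \<delta>"
    using \<open>0 < e\<close> \<open>e \<le> \<delta>\<close> \<open>e \<le> (hi - lo) / 2\<close> assms(3) by (auto simp: v_def)
  then show ?thesis
    by (intro that[of v]) (auto simp: ivl_def)
qed

lemma box_nonneg:
  assumes "\<forall>i<n. ivl_ok (xlo i) (xhi i) (xcl i) (xcr i)" "x \<in> box n xlo xhi xcl xcr"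
  shows "x \<in> nonneg_vec n"
  using assms ivl_bounds by (fastforce simp: box_def nonneg_vec_def ivl_ok_def)

lemma xk_nonneg:
  assumes "\<forall>i<n. ivl_ok (xlo i) (xhi i) (xcl i) (xcr i)"
  shows "xk xlo xhi j \<in> nonneg_vec n"
  using assms by (fastforce simp: xk_def nonneg_vec_def ivl_ok_def)

lemma box_corner_approx:
  assumes "\<forall>i<n. ivl_ok (xlo i) (xhi i) (xcl i) (xcr i)" "0 < \<delta>"
  obtains y where "y \<in> box n xlo xhi xcl xcr" "\<forall>k<n. \<bar>y k - xk xlo xhi j k\<bar> \<le> \<delta>"
proof -
  have "\<forall>k. \<exists>v. k < n \<longrightarrow> v \<in> ivl (xlo k) (xhi k) (xcl k) (xcr k) \<and> \<bar>v - xk xlo xhi j k\<bar> \<le> \<delta>"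
    using ivl_endpoint_approx[OF _ assms(2)] assms(1) by (metis xk_def)
  then obtain y where "\<forall>k<n. y k \<in> ivl (xlo k) (xhi k) (xcl k) (xcr k) \<and> \<bar>y k - xk xlo xhi j k\<bar> \<le> \<delta>"
    by metis
  then show ?thesis
    by (intro that) (auto simp: box_def)
qed

lemma box_eq_Max_comb_corners:
  assumes "\<forall>i<n. ivl_ok (xlo i) (xhi i) (xcl i) (xcr i)" "x \<in> box n xlo xhi xcl xcr"
  obtains c where "\<forall>j<n. 0 \<le> c j" "\<forall>k<n. x k = Max ((\<lambda>j. c j * xk xlo xhi j k) ` {0..<n})"
proof -
  have x: "0 \<le> xlo k" "xlo k \<le> x k" "x k \<le> xhi k" if "k < n" for k
    using assms that ivl_bounds by (fastforce simp: box_def ivl_ok_def)+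
  \<comment> \<open>Corner j contributes exactly x j at j and at most xlo k <= x k at k \<noteq> j.\<close>
  define c where "c j = (if 0 < xhi j then x j / xhi j else 0)" for j
  have c: "0 \<le> c j" "c j \<le> 1" "c j * xhi j = x j" if "j < n" for j
    using x[OF that] by (auto simp: c_def divide_le_eq_1)
  have "x k = Max ((\<lambda>j. c j * xk xlo xhi j k) ` {0..<n})" if "k < n" for k
  proof (rule sym, rule Max_eqI)
    show "x k \<in> (\<lambda>j. c j * xk xlo xhi j k) ` {0..<n}"
      using that c(3)[OF that] by (intro image_eqI[of _ _ k]) (auto simp: xk_def)
    fix z assume "z \<in> (\<lambda>j. c j * xk xlo xhi j k) ` {0..<n}"
    then obtain j where "j < n" "z = c j * xk xlo xhi j k"
      by auto
    moreover have "c j * xlo k \<le> x k"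
      using c[OF \<open>j < n\<close>] x[OF that] by (metis mult_left_le_one_le order_trans)
    ultimately show "z \<le> x k"
      using c(3)[OF that] by (auto simp: xk_def)
  qed simp
  then show ?thesis
    using that c(1) by blast
qed

lemma box_subset_Attr_if_corners:
  assumes "1 \<le> n" "nonneg_mat n M" "\<forall>i<n. ivl_ok (xlo i) (xhi i) (xcl i) (xcr i)"
    and "\<forall>i<n. xk xlo xhi i \<in> Attr n M"
  shows "box n xlo xhi xcl xcr \<subseteq> Attr n M"
proof
  fix x assume "x \<in> box n xlo xhi xcl xcr"
  then obtain c where c: "\<forall>j<n. 0 \<le> c j" "\<forall>k<n. x k = Max ((\<lambda>j. c j * xk xlo xhi j k) ` {0..<n})"
    using box_eq_Max_comb_corners[OF assms(3)] by blast
  have "finite {0..<n}" "{0..<n} \<noteq> {}"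
    using assms(1) by auto
  then show "x \<in> Attr n M"
    by (rule Attr_Max_comb[OF assms(1,2)]) (use c assms(4) in auto)
qed

lemma corners_Attr_circ_if_box_subset:
  assumes "a \<in> nonneg_vec n" "b \<in> nonneg_vec n" "k < n" "\<forall>t<n. a t \<le> a k" "\<forall>t<n. b t \<le> b k"
    and "b k \<le> a k" "\<forall>t<n. b k * a t \<le> a k * b t"
    and "\<forall>i<n. ivl_ok (xlo i) (xhi i) (xcl i) (xcr i)" "box n xlo xhi xcl xcr \<subseteq> Attr n (circ n a)"
  shows "xk xlo xhi i \<in> Attr n (circ n b)"
proof -
  have "1 \<le> n" "0 \<le> b k"
    using assms(2,3) by (auto simp: nonneg_vec_def)
  note Attr_b = Attr_circ_iff[OF assms(2,3,5)]
  have box_b: "in_eigenspace n (circ n b) (b k) (mx_iter n (circ n b) (n - 1) y)"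
    if "y \<in> box n xlo xhi xcl xcr" for y
  proof -
    have "y \<in> Attr n (circ n b)"
      using that assms(9) Attr_circ_mono[OF assms(1-7)] by blast
    then show ?thesis
      by (simp add: Attr_b)
  qed
  have "in_eigenspace n (circ n b) (b k) (mx_iter n (circ n b) (n - 1) (xk xlo xhi i))"
  proof (rule in_eigenspace_mx_iter_closed[OF \<open>1 \<le> n\<close> nonneg_mat_circ[OF assms(2)] \<open>0 \<le> b k\<close> xk_nonneg[OF assms(8)]])
    fix \<delta> :: real assume "0 < \<delta>"
    then obtain y where "y \<in> box n xlo xhi xcl xcr" "\<forall>k<n. \<bar>y k - xk xlo xhi i k\<bar> \<le> \<delta>"
      using box_corner_approx[OF assms(8)] by blast
    then show "\<exists>y \<in> nonneg_vec n. (\<forall>k<n. \<bar>y k - xk xlo xhi i k\<bar> \<le> \<delta>)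
        \<and> in_eigenspace n (circ n b) (b k) (mx_iter n (circ n b) (n - 1) y)"
      using box_nonneg[OF assms(8)] box_b by blast
  qed
  then show ?thesis
    using xk_nonneg[OF assms(8)] by (simp add: Attr_b)
qed

definition hat_vec :: "nat \<Rightarrow> (nat \<Rightarrow> real) \<Rightarrow> (nat \<Rightarrow> real) \<Rightarrow> nat \<Rightarrow> real" where
  "hat_vec n alo ahi = (\<lambda>i. min (Max (alo ` {0..<n})) (ahi i))"

lemma hatA_eq_circ_hat_vec: "hatA n alo ahi = circ n (hat_vec n alo ahi)"
  by (simp add: hatA_def hat_vec_def)

lemma hat_vec_nonneg:
  assumes "1 \<le> n" "\<forall>t<n. 0 \<le> alo t \<and> alo t \<le> ahi t"
  shows "hat_vec n alo ahi \<in> nonneg_vec n"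
proof -
  obtain j where "j < n" "Max (alo ` {0..<n}) = alo j"
    using ex_argmax[OF assms(1), of alo] by blast
  then show ?thesis
    using assms(2) by (auto simp: hat_vec_def nonneg_vec_def intro: order_trans)
qed

lemma hat_vec_dominated:
  assumes "1 \<le> n" "\<forall>t<n. 0 \<le> alo t \<and> alo t \<le> a t \<and> a t \<le> ahi t" "k < n" "\<forall>t<n. a t \<le> a k"
  defines "b \<equiv> hat_vec n alo ahi"
  shows "\<forall>t<n. b t \<le> b k" "b k \<le> a k" "\<forall>t<n. b k * a t \<le> a k * b t"
proof -
  define \<alpha> where "\<alpha> = Max (alo ` {0..<n})"
  obtain j where "j < n" "\<alpha> = alo j"
    using ex_argmax[OF assms(1), of alo] unfolding \<alpha>_def by blast
  then have "0 \<le> \<alpha>" "\<alpha> \<le> a k"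
    using assms(2,4) by (auto intro: order_trans)
  moreover have "a k \<le> ahi k"
    using assms(2,3) by simp
  ultimately have bk: "b k = \<alpha>"
    by (simp add: b_def hat_vec_def \<alpha>_def[symmetric])
  show "\<forall>t<n. b t \<le> b k" "b k \<le> a k"
    using \<open>\<alpha> \<le> a k\<close> bk by (auto simp: b_def hat_vec_def \<alpha>_def[symmetric])
  show "\<forall>t<n. b k * a t \<le> a k * b t"
  proof (intro allI impI)
    fix t assume "t < n"
    show "b k * a t \<le> a k * b t"
    proof (cases "\<alpha> \<le> ahi t")
      case True
      then show ?thesis
        using bk assms(4) \<open>t < n\<close> \<open>0 \<le> \<alpha>\<close>
        by (simp add: b_def hat_vec_def \<alpha>_def[symmetric] mult.commute mult_left_mono)
    next
      case False
      then have "b t = ahi t"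
        by (simp add: b_def hat_vec_def \<alpha>_def[symmetric])
      moreover have "\<alpha> * a t \<le> a k * ahi t"
        using assms(2) \<open>t < n\<close> \<open>0 \<le> \<alpha>\<close> \<open>\<alpha> \<le> a k\<close> by (intro mult_mono) auto
      ultimately show ?thesis
        using bk by simp
    qed
  qed
qed

theorem theorem4:
  fixes n :: nat and xlo xhi alo ahi :: "nat \<Rightarrow> real" and xcl xcr acl acr :: "nat \<Rightarrow> bool"
  assumes "1 \<le> n"
    and "\<forall>i<n. ivl_ok (xlo i) (xhi i) (xcl i) (xcr i)"
    and "\<forall>t<n. ivl_ok (alo t) (ahi t) (acl t) (acr t)"
    and "hatA n alo ahi \<in> IC n alo ahi acl acr"
  shows "(\<exists>A \<in> IC n alo ahi acl acr. \<forall>x \<in> box n xlo xhi xcl xcr. x \<in> Attr n A)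
     \<longleftrightarrow> (\<forall>i<n. xk xlo xhi i \<in> Attr n (hatA n alo ahi))"
proof
  assume "\<exists>A \<in> IC n alo ahi acl acr. \<forall>x \<in> box n xlo xhi xcl xcr. x \<in> Attr n A"
  then obtain a where a: "\<forall>t<n. a t \<in> ivl (alo t) (ahi t) (acl t) (acr t)"
    and box: "box n xlo xhi xcl xcr \<subseteq> Attr n (circ n a)"
    unfolding IC_def by blast
  have bounds: "\<forall>t<n. 0 \<le> alo t \<and> alo t \<le> a t \<and> a t \<le> ahi t"
    using a assms(3) ivl_bounds by (fastforce simp: ivl_ok_def)
  have "a \<in> nonneg_vec n"
    using bounds by (auto simp: nonneg_vec_def)
  have "hat_vec n alo ahi \<in> nonneg_vec n"
    using bounds by (intro hat_vec_nonneg[OF assms(1)]) (auto intro: order_trans)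
  obtain k where k: "k < n" "\<forall>t<n. a t \<le> a k"
    using ex_argmax[OF assms(1)] by blast
  show "\<forall>i<n. xk xlo xhi i \<in> Attr n (hatA n alo ahi)"
    unfolding hatA_eq_circ_hat_vec
    using corners_Attr_circ_if_box_subset[OF \<open>a \<in> nonneg_vec n\<close> \<open>hat_vec n alo ahi \<in> nonneg_vec n\<close> k
        hat_vec_dominated[OF assms(1) bounds k] assms(2) box]
    by blast
next
  assume "\<forall>i<n. xk xlo xhi i \<in> Attr n (hatA n alo ahi)"
  moreover have "nonneg_mat n (hatA n alo ahi)"
    using assms(3) unfolding hatA_eq_circ_hat_vec
    by (intro nonneg_mat_circ hat_vec_nonneg[OF assms(1)]) (auto simp: ivl_ok_def)
  ultimately show "\<exists>A \<in> IC n alo ahi acl acr. \<forall>x \<in> box n xlo xhi xcl xcr. x \<in> Attr n A"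
    using box_subset_Attr_if_corners[OF assms(1) _ assms(2)] assms(4) by blast
qed

end
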